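(* Let $\mathcal{M}=(S,P,E,s_{init},L)$ be a CTMC, $\varepsilon,\delta\geq0$, let $R$ be a transitive $(\varepsilon,\delta)$-bisimulation on $\mathcal{M}$ and let $q\geq\max_{s\in S}E(s)$. Then the partition $S/R$ of $S$ into equivalence classes of $R$ is a $q\cdot(e^{\delta}(1+\varepsilon)-1)$-quasi-lumpability.
   Context: A CTMC $(S,P,E,s_{init},L)$: finite $S$, $P\colon S\to\mathrm{Distr}(S)$ (with $P(s,A)=\sum_{a\in A}P(s,a)$), $E\colon S\to\mathbb{R}_{>0}$, initial state, labeling $L\colon S\to2^{AP}$. For $R\subseteq S\times S$, $A\subseteq S$: $R(A)=\{t\mid\exists a\in A:(a,t)\in R\}$. A reflexive symmetric $R$ is an $(\varepsilon,\delta)$-bisimulation if for all $(s,s')\in R$: $L(s)=L(s')$, $|\ln E(s)-\ln E(s')|\leq\delta$, and $P(s,A)\leq P(s',R(A))+\varepsilon$ for all $A\subseteq S$. For $\tau\geq0$, a partition $\Omega=\{\Omega_1,\dots,\Omega_m\}$ of $S$ is a $\tau$-quasi-lumpability if for all $1\leq i,j\leq m$ and all $s,s'\in\Omega_i$: $|P(s,\Omega_j)\cdot E(s)-P(s',\Omega_j)\cdot E(s')|\leq\tau$. *)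

theory Defs
  imports Main "HOL.Real" "HOL.Transcendental"
begin

definition ctmc :: "'a set \<Rightarrow> ('a \<Rightarrow> 'a \<Rightarrow> real) \<Rightarrow> ('a \<Rightarrow> real) \<Rightarrow> 'a \<Rightarrow> ('a \<Rightarrow> 'l set) \<Rightarrow> bool" where
  "ctmc S P E s_init L \<longleftrightarrow>
     finite S \<and> S \<noteq> {} \<and> s_init \<in> S \<and>
     (\<forall>s\<in>S. (\<forall>t\<in>S. P s t \<ge> 0) \<and> (\<Sum>t\<in>S. P s t) = 1) \<and>
     (\<forall>s\<in>S. E s > 0)"

definition Pset :: "('a \<Rightarrow> 'a \<Rightarrow> real) \<Rightarrow> 'a \<Rightarrow> 'a set \<Rightarrow> real" where
  "Pset P s A = (\<Sum>a\<in>A. P s a)"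

definition eps_delta_bisim ::
  "'a set \<Rightarrow> ('a \<Rightarrow> 'a \<Rightarrow> real) \<Rightarrow> ('a \<Rightarrow> real) \<Rightarrow> ('a \<Rightarrow> 'l set) \<Rightarrow> real \<Rightarrow> real \<Rightarrow> ('a \<times> 'a) set \<Rightarrow> bool" where
  "eps_delta_bisim S P E L \<epsilon> \<delta> R \<longleftrightarrow>
     R \<subseteq> S \<times> S \<and> refl_on S R \<and> sym R \<and>
     (\<forall>(s, s') \<in> R. L s = L s' \<and> \<bar>ln (E s) - ln (E s')\<bar> \<le> \<delta> \<and>
        (\<forall>A. A \<subseteq> S \<longrightarrow> Pset P s A \<le> Pset P s' (R `` A) + \<epsilon>))"

definition quasi_lumpability ::
  "'a set \<Rightarrow> ('a \<Rightarrow> 'a \<Rightarrow> real) \<Rightarrow> ('a \<Rightarrow> real) \<Rightarrow> real \<Rightarrow> 'a set set \<Rightarrow> bool" where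
  "quasi_lumpability S P E \<tau> \<Omega> \<longleftrightarrow>
     \<tau> \<ge> 0 \<and>
     \<comment> \<open>\<Omega> is a partition of S\<close>
     \<Union>\<Omega> = S \<and> {} \<notin> \<Omega> \<and>
     (\<forall>A\<in>\<Omega>. \<forall>B\<in>\<Omega>. A \<noteq> B \<longrightarrow> A \<inter> B = {}) \<and>
     (\<forall>\<Omega>i\<in>\<Omega>. \<forall>\<Omega>j\<in>\<Omega>. \<forall>s\<in>\<Omega>i. \<forall>s'\<in>\<Omega>i.
        \<bar>Pset P s \<Omega>j * E s - Pset P s' \<Omega>j * E s'\<bar> \<le> \<tau>)"

end

theory Submission
  imports Defs
begin

text \<open>Let s, s' lie in a common class and D be any class. Since R is transitive, D is closed
  under R, so the bisimulation condition gives P(s,D) \<le> P(s',D) + \<epsilon>, while the rate condition gives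
  E(s) \<le> exp \<delta> E(s'). Hence, using P(s',D) \<le> 1 and E(s') \<le> q,
  P(s,D) E(s) - P(s',D) E(s') \<le> E(s') (P(s',D) (exp \<delta> - 1) + \<epsilon> exp \<delta>) \<le> q (exp \<delta> (1 + \<epsilon>) - 1).
  The bound on the absolute value follows by symmetry of R.\<close>

lemma ctmc_Pset_nonneg:
  assumes "ctmc S P E s_init L" "s \<in> S" "D \<subseteq> S"
  shows "0 \<le> Pset P s D"
  unfolding Pset_def by (intro sum_nonneg) (use assms in \<open>auto simp: ctmc_def\<close>)

lemma ctmc_Pset_le_one:
  assumes "ctmc S P E s_init L" "s \<in> S" "D \<subseteq> S"
  shows "Pset P s D \<le> 1"
proof -
  have "Pset P s D \<le> (\<Sum>t\<in>S. P s t)"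
    using assms unfolding ctmc_def Pset_def by (intro sum_mono2) auto
  also have "\<dots> = 1"
    using assms unfolding ctmc_def by auto
  finally show ?thesis .
qed

lemma ctmc_rate_le:
  assumes "ctmc S P E s_init L" "Max (E ` S) \<le> q" "s \<in> S"
  shows "E s \<le> q"
  using assms unfolding ctmc_def by (meson Max_ge finite_imageI imageI order_trans)

lemma le_exp_mult_if_abs_ln_diff_le:
  fixes x y d :: real
  assumes "0 < x" "0 < y" "\<bar>ln x - ln y\<bar> \<le> d"
  shows "x \<le> exp d * y"
proof -
  have "x = exp (ln x)" using assms(1) by simp
  also have "\<dots> \<le> exp (d + ln y)" using assms(3) by simp
  also have "\<dots> = exp d * y" using assms(2) by (simp add: exp_add)
  finally show ?thesis .
qed

lemma perturbed_product_diff_le: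
  fixes a b x y e k q :: real
  assumes "0 \<le> a" "a \<le> x + e" "0 \<le> x" "x \<le> 1"
    and "0 \<le> b" "b \<le> k * y" "0 \<le> y" "y \<le> q"
    and "0 \<le> e" "1 \<le> k"
  shows "a * b - x * y \<le> q * (k * (1 + e) - 1)"
proof -
  have "a * b \<le> (x + e) * (k * y)"
    using assms by (intro mult_mono) auto
  then have "a * b - x * y \<le> y * (x * (k - 1) + e * k)"
    by (simp add: algebra_simps)
  also have "\<dots> \<le> y * ((k - 1) + e * k)"
    using assms by (intro mult_left_mono add_right_mono mult_left_le_one_le) auto
  also have "\<dots> \<le> q * ((k - 1) + e * k)"
    using assms by (intro mult_right_mono) auto
  finally show ?thesis by (simp add: algebra_simps)
qed

lemma eps_delta_bisim_equiv:
  assumes "eps_delta_bisim S P E L \<epsilon> \<delta> R" "trans R"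
  shows "equiv S R"
  using assms unfolding eps_delta_bisim_def by (simp add: equiv_def)

lemma equiv_Image_quotient_eq:
  assumes "equiv S R" "D \<in> S // R"
  shows "R `` D = D"
  using assms(2) by (rule quotientE) (simp add: refines_equiv_class_eq[OF subset_refl assms(1) assms(1)])

lemma eps_delta_bisim_Pset_quotient_le:
  assumes "eps_delta_bisim S P E L \<epsilon> \<delta> R" "trans R" "(s, s') \<in> R" "D \<in> S // R"
  shows "Pset P s D \<le> Pset P s' D + \<epsilon>"
proof -
  have "equiv S R" using assms(1,2) by (rule eps_delta_bisim_equiv)
  then have "D \<subseteq> S" and "R `` D = D"
    using assms(4) by (rule in_quotient_imp_subset, rule equiv_Image_quotient_eq)
  with assms(1,3) show ?thesis
    unfolding eps_delta_bisim_def by (metis (no_types, lifting) case_prodD)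
qed

lemma quasi_lumpability_quotientI:
  assumes "equiv S R" "0 \<le> \<tau>"
    and "\<And>s s' D. (s, s') \<in> R \<Longrightarrow> D \<in> S // R \<Longrightarrow> Pset P s D * E s - Pset P s' D * E s' \<le> \<tau>"
  shows "quasi_lumpability S P E \<tau> (S // R)"
  unfolding quasi_lumpability_def
proof (intro conjI ballI impI)
  show "\<Union> (S // R) = S" using assms(1) by (rule Union_quotient)
  show "{} \<notin> S // R" using assms(1) by (meson in_quotient_imp_non_empty)
  show "A \<inter> B = {}" if "A \<in> S // R" "B \<in> S // R" "A \<noteq> B" for A B
    using quotient_disj[OF assms(1) that(1,2)] that(3) by auto
  show "\<bar>Pset P s D * E s - Pset P s' D * E s'\<bar> \<le> \<tau>"
    if "C \<in> S // R" "D \<in> S // R" "s \<in> C" "s' \<in> C" for C D s s'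
  proof -
    have "(s, s') \<in> R" and "(s', s) \<in> R"
      using that in_quotient_imp_in_rel[OF assms(1) that(1)] by simp_all
    then show ?thesis using assms(3) that(2) by (simp add: abs_le_iff)
  qed
qed (fact assms(2))

theorem proposition1:
  fixes S :: "'a set" and P :: "'a \<Rightarrow> 'a \<Rightarrow> real" and E :: "'a \<Rightarrow> real"
    and s_init :: 'a and L :: "'a \<Rightarrow> 'l set"
    and \<epsilon> \<delta> q :: real and R :: "('a \<times> 'a) set"
  assumes "ctmc S P E s_init L"
    and "\<epsilon> \<ge> 0" and "\<delta> \<ge> 0"
    and "eps_delta_bisim S P E L \<epsilon> \<delta> R"
    and "trans R"
    and "q \<ge> Max (E ` S)"
  shows "quasi_lumpability S P E (q * (exp \<delta> * (1 + \<epsilon>) - 1)) (S // R)"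
proof (rule quasi_lumpability_quotientI)
  have equiv: "equiv S R" using assms(4,5) by (rule eps_delta_bisim_equiv)
  then show "equiv S R" .
  obtain s0 where s0: "s0 \<in> S" using assms(1) unfolding ctmc_def by auto
  have "0 < E s0" using assms(1) s0 unfolding ctmc_def by blast
  then have "0 \<le> q" using ctmc_rate_le[OF assms(1,6) s0] by linarith
  moreover have "1 \<le> exp \<delta> * (1 + \<epsilon>)"
    using mult_mono[of 1 "exp \<delta>" 1 "1 + \<epsilon>"] assms(2,3) by simp
  ultimately show "0 \<le> q * (exp \<delta> * (1 + \<epsilon>) - 1)" by simp
  fix s s' D assume ss': "(s, s') \<in> R" and D: "D \<in> S // R"
  have in_S: "s \<in> S" "s' \<in> S" "D \<subseteq> S"
    using ss' equiv_type[OF equiv] in_quotient_imp_subset[OF equiv D] by auto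
  have E_pos: "0 < E s" "0 < E s'" using assms(1) in_S unfolding ctmc_def by auto
  have "\<bar>ln (E s) - ln (E s')\<bar> \<le> \<delta>" using assms(4) ss' unfolding eps_delta_bisim_def by auto
  then have "E s \<le> exp \<delta> * E s'" using E_pos by (rule le_exp_mult_if_abs_ln_diff_le[rotated 2])
  with in_S E_pos show "Pset P s D * E s - Pset P s' D * E s' \<le> q * (exp \<delta> * (1 + \<epsilon>) - 1)"
    by (intro perturbed_product_diff_le ctmc_Pset_nonneg[OF assms(1)] ctmc_Pset_le_one[OF assms(1)]
        eps_delta_bisim_Pset_quotient_le[OF assms(4,5) ss' D] ctmc_rate_le[OF assms(1,6)])
      (use assms(2,3) in auto)
qed

end
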